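(* Let $V$ be a finite-dimensional real $\mathbb Z/3$-representation and $n\ge0$ an integer. Then $V$ has a $\mathbb Z/3$-invariant basis up to sign if and only if $V\oplus n\mathbf 3$ does.
   Context: $\mathbf 3$ denotes the regular representation of $\mathbb Z/3$ ($\mathbb R^3$ with cyclic permutation of coordinates), $n\mathbf 3$ the direct sum of $n$ copies. A basis is invariant up to sign if every group element maps each basis element to plus or minus a basis element. *)

theory Defs
  imports "HOL-Analysis.Analysis" "HOL-Library.Numeral_Type"
begin

text \<open>A real Z/3-representation is given by a linear map T with T^3 = id (the action
of the generator).\<close>

definition Z3_inv_basis_up_to_sign :: "'a::real_vector set \<Rightarrow> ('a \<Rightarrow> 'a) \<Rightarrow> bool" where
  "Z3_inv_basis_up_to_sign S T \<longleftrightarrow>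
     (\<exists>B. B \<subseteq> S \<and> independent B \<and> span B = S \<and>
          (\<forall>k<(3::nat). \<forall>b\<in>B. (T ^^ k) b \<in> B \<union> uminus ` B))"

text \<open>The regular representation 3: R^3 with cyclic permutation of coordinates.\<close>
definition cyc3 :: "real^3 \<Rightarrow> real^3" where
  "cyc3 x = (\<chi> i. x $ (i + 1))"

text \<open>n copies of 3, realised as the vectors of real^3^'m supported on an index set J
with card J = n (J may be empty).\<close>
definition reg_copies :: "'m::finite set \<Rightarrow> (real^3^'m) set" where
  "reg_copies J = {x. \<forall>j. j \<notin> J \<longrightarrow> x $ j = 0}"

definition sum_action :: "('v \<Rightarrow> 'v) \<Rightarrow> ('v \<times> (real^3^'m)) \<Rightarrow> ('v \<times> (real^3^'m))" where
  "sum_action T p = (T (fst p), (\<chi> j. cyc3 (snd p $ j)))"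

end

theory Submission
  imports Defs
begin

(* Split V = Fix \<oplus> Ker, where Fix is the fixed space of the generator T and Ker the kernel
   of v \<mapsto> v + T v + T (T v).  V has an invariant basis up to sign iff dim Ker \<le> 2 * dim Fix.
   Such a basis is permuted by T up to sign, in orbits of size 1 (fixed vectors) or 3, and the
   projections to Ker of a 3-orbit span at most a plane.  Conversely, since x^2 + x + 1 has no
   real root, Ker has a basis X \<union> T ` X; pairing each x \<in> X with its own basis vector f of Fix
   gives the permuted triples f + x, f + T x, f + T (T x), completed by the remaining basis
   vectors of Fix.  As n3 contributes n to dim Fix and 2n to dim Ker, the criterion is the same
   for V and V \<oplus> n3. *)

lemma neg_notin_independent:
  fixes B :: "'a::real_vector set"
  assumes "independent B" and "b \<in> B"
  shows "- b \<notin> B"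
proof
  assume neg: "- b \<in> B"
  have "- b \<noteq> b"
  proof
    assume "- b = b"
    then have "(2::real) *\<^sub>R b = 0" by (metis add.right_inverse scaleR_2)
    then show False using assms dependent_zero by auto
  qed
  then have "- b \<in> span (B - {- b})" using assms(2) by (intro span_neg span_base) auto
  then show False using assms(1) neg unfolding dependent_def by blast
qed

lemma period3_transversal:
  fixes f :: "'a \<Rightarrow> 'a"
  assumes fin: "finite A" and maps: "f ` A \<subseteq> A"
    and period: "\<And>a. a \<in> A \<Longrightarrow> f (f (f a)) = a" and no_fix: "\<And>a. a \<in> A \<Longrightarrow> f a \<noteq> a"
  obtains R where "R \<subseteq> A" "A \<subseteq> R \<union> f ` R \<union> f ` f ` R" "3 * card R \<le> card A"
proof -
  define orb where "orb a = {a, f a, f (f a)}" for a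
  have orb_eq: "orb b = orb a" if "a \<in> A" "b \<in> orb a" for a b
    using that period[OF that(1)] unfolding orb_def by auto
  have card_orb: "card (orb a) = 3" if a: "a \<in> A" for a
  proof -
    have "f a \<in> A" using a maps by blast
    then have "f a \<noteq> a" "f (f a) \<noteq> f a" "f (f a) \<noteq> a"
      using no_fix a period[OF a] by metis+
    then show ?thesis unfolding orb_def by simp
  qed
  define C where "C = orb ` A"
  have orb_A: "orb a \<subseteq> A" if "a \<in> A" for a using that maps unfolding orb_def by auto
  then have UC: "\<Union>C = A" unfolding C_def orb_def by auto
  have "3 * card C = card (\<Union>C)"
  proof (rule card_partition)
    show "finite C" "finite (\<Union>C)" using fin UC unfolding C_def by simp_all
    show "\<And>c. c \<in> C \<Longrightarrow> card c = 3" using card_orb unfolding C_def by blast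
    show "\<And>c1 c2. c1 \<in> C \<Longrightarrow> c2 \<in> C \<Longrightarrow> c1 \<noteq> c2 \<Longrightarrow> c1 \<inter> c2 = {}"
      unfolding C_def using orb_eq orb_A by blast
  qed
  then have cardC: "3 * card C = card A" using UC by simp
  define rep :: "'a set \<Rightarrow> 'a" where "rep c = (SOME a. a \<in> c)" for c
  have rep: "rep c \<in> c" if c: "c \<in> C" for c
  proof -
    obtain a where "c = orb a" using c unfolding C_def by blast
    then have "a \<in> c" unfolding orb_def by simp
    then show ?thesis unfolding rep_def by (rule someI)
  qed
  define R where "R = rep ` C"
  show thesis
  proof
    show "R \<subseteq> A" using rep UC unfolding R_def by auto
    show "A \<subseteq> R \<union> f ` R \<union> f ` f ` R"
    proof
      fix a assume a: "a \<in> A"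
      then have "orb a \<in> C" unfolding C_def by blast
      then have "rep (orb a) \<in> R" and "orb (rep (orb a)) = orb a"
        using orb_eq[OF a] rep unfolding R_def by auto
      moreover have "a \<in> orb a" unfolding orb_def by simp
      ultimately obtain r where "r \<in> R" "a \<in> orb r" by metis
      then show "a \<in> R \<union> f ` R \<union> f ` f ` R" unfolding orb_def by blast
    qed
    have "card R \<le> card C" unfolding R_def C_def using fin by (simp add: card_image_le)
    then show "3 * card R \<le> card A" using cardC by linarith
  qed
qed

definition orbit_sum :: "('a::real_vector \<Rightarrow> 'a) \<Rightarrow> 'a \<Rightarrow> 'a" where
  "orbit_sum T v = v + T v + T (T v)"

definition fixed_space :: "'a::real_vector set \<Rightarrow> ('a \<Rightarrow> 'a) \<Rightarrow> 'a set" where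
  "fixed_space S T = {v \<in> S. T v = v}"

definition orbit_sum_kernel :: "'a::real_vector set \<Rightarrow> ('a \<Rightarrow> 'a) \<Rightarrow> 'a set" where
  "orbit_sum_kernel S T = {v \<in> S. orbit_sum T v = 0}"

locale Z3_rep =
  fixes S :: "'a::euclidean_space set" and T :: "'a \<Rightarrow> 'a"
  assumes subspace_S: "subspace S" and linear_T: "linear T"
    and T_in_S: "\<And>v. v \<in> S \<Longrightarrow> T v \<in> S"
    and T_cube: "\<And>v. v \<in> S \<Longrightarrow> T (T (T v)) = v"
begin

abbreviation Fix :: "'a set" where
  "Fix \<equiv> fixed_space S T"

abbreviation Ker :: "'a set" where
  "Ker \<equiv> orbit_sum_kernel S T"

definition proj_Fix :: "'a \<Rightarrow> 'a" where
  "proj_Fix v = (1/3) *\<^sub>R orbit_sum T v"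

definition proj_Ker :: "'a \<Rightarrow> 'a" where
  "proj_Ker v = v - proj_Fix v"

lemmas T_linear_simps =
  linear_add[OF linear_T] linear_scale[OF linear_T] linear_neg[OF linear_T]
  linear_diff[OF linear_T] linear_0[OF linear_T]

lemma linear_orbit_sum: "linear (orbit_sum T)"
  unfolding orbit_sum_def by (intro linearI) (simp_all add: T_linear_simps algebra_simps)

lemma linear_proj_Ker: "linear proj_Ker"
  unfolding proj_Ker_def proj_Fix_def
  using linear_orbit_sum by (intro linearI) (simp_all add: linear_add linear_scale algebra_simps)

lemma orbit_sum_in_S: "v \<in> S \<Longrightarrow> orbit_sum T v \<in> S"
  unfolding orbit_sum_def using subspace_S T_in_S by (simp add: subspace_add)

lemma orbit_sum_T: "v \<in> S \<Longrightarrow> orbit_sum T (T v) = orbit_sum T v"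
  unfolding orbit_sum_def using T_cube by (simp add: add_ac)

lemma T_orbit_sum: "T (orbit_sum T v) = orbit_sum T (T v)"
  unfolding orbit_sum_def by (simp add: T_linear_simps)

lemma orbit_sum_fixed: "v \<in> Fix \<Longrightarrow> orbit_sum T v = (3::real) *\<^sub>R v"
  unfolding fixed_space_def orbit_sum_def by (simp add: scaleR_add_left[of 2 1, simplified] scaleR_2)

lemma subspace_Fix: "subspace Fix"
  using subspace_S unfolding fixed_space_def subspace_def by (simp add: T_linear_simps)

lemma subspace_Ker: "subspace Ker"
  using subspace_S linear_orbit_sum unfolding orbit_sum_kernel_def subspace_def
  by (simp add: linear_add linear_scale linear_0)

lemma Fix_subset: "Fix \<subseteq> S" and Ker_subset: "Ker \<subseteq> S"
  unfolding fixed_space_def orbit_sum_kernel_def by auto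

lemma T_in_Ker: "v \<in> Ker \<Longrightarrow> T v \<in> Ker"
  unfolding orbit_sum_kernel_def using T_in_S orbit_sum_T by simp

lemma T_T_Ker: "v \<in> Ker \<Longrightarrow> T (T v) = - v - T v"
  unfolding orbit_sum_kernel_def orbit_sum_def by (auto simp: algebra_simps eq_neg_iff_add_eq_0)

lemma proj_Fix_in_Fix: "v \<in> S \<Longrightarrow> proj_Fix v \<in> Fix"
  unfolding fixed_space_def proj_Fix_def
  using orbit_sum_in_S orbit_sum_T subspace_S by (simp add: subspace_scale T_linear_simps T_orbit_sum)

lemma proj_Ker_in_Ker: "v \<in> S \<Longrightarrow> proj_Ker v \<in> Ker"
proof -
  assume v: "v \<in> S"
  have "proj_Ker v \<in> S"
    using subspace_diff[OF subspace_S v] proj_Fix_in_Fix[OF v] Fix_subset unfolding proj_Ker_def by blast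
  moreover have "orbit_sum T (proj_Ker v) = 0"
    using proj_Fix_in_Fix[OF v] orbit_sum_fixed linear_diff[OF linear_orbit_sum]
    unfolding proj_Ker_def proj_Fix_def by simp
  ultimately show ?thesis unfolding orbit_sum_kernel_def by blast
qed

lemma proj_Ker_Ker: "v \<in> Ker \<Longrightarrow> proj_Ker v = v"
  unfolding orbit_sum_kernel_def proj_Ker_def proj_Fix_def by simp

lemma proj_Ker_Fix: "v \<in> Fix \<Longrightarrow> proj_Ker v = 0"
  unfolding proj_Ker_def proj_Fix_def by (simp add: orbit_sum_fixed)

lemma S_subset_span:
  assumes "Fix \<subseteq> span B" and "Ker \<subseteq> span B"
  shows "S \<subseteq> span B"
proof
  fix v assume v: "v \<in> S"
  have "proj_Fix v + proj_Ker v \<in> span B"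
    using assms proj_Fix_in_Fix[OF v] proj_Ker_in_Ker[OF v] by (blast intro: span_add)
  then show "v \<in> span B" unfolding proj_Ker_def by simp
qed

lemma dim_S: "dim S = dim Fix + dim Ker"
proof -
  have "Fix \<inter> Ker = {0}"
    using subspace_0[OF subspace_Fix] subspace_0[OF subspace_Ker] orbit_sum_fixed
    unfolding orbit_sum_kernel_def by auto
  moreover have "{x + y |x y. x \<in> Fix \<and> y \<in> Ker} = S"
  proof
    show "{x + y |x y. x \<in> Fix \<and> y \<in> Ker} \<subseteq> S"
      using Fix_subset Ker_subset subspace_add[OF subspace_S] by blast
    show "S \<subseteq> {x + y |x y. x \<in> Fix \<and> y \<in> Ker}"
      using proj_Fix_in_Fix proj_Ker_in_Ker unfolding proj_Ker_def by force
  qed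
  ultimately show ?thesis using dim_sums_Int[OF subspace_Fix subspace_Ker] by simp
qed

lemma signed_permutation:
  assumes B: "B \<subseteq> S" "independent B" and TB: "\<And>b. b \<in> B \<Longrightarrow> T b \<in> B \<union> uminus ` B"
  obtains \<sigma> where "\<sigma> ` B \<subseteq> B" "\<And>b. b \<in> B \<Longrightarrow> \<sigma> (\<sigma> (\<sigma> b)) = b"
    "\<And>b. b \<in> B \<Longrightarrow> T b = \<sigma> b \<or> T b = - \<sigma> b" "\<And>b. b \<in> B \<Longrightarrow> \<sigma> b = b \<Longrightarrow> T b = b"
proof
  define \<sigma> where "\<sigma> b = (if T b \<in> B then T b else - T b)" for b
  show \<sigma>_B: "\<sigma> ` B \<subseteq> B"
  proof
    fix c assume "c \<in> \<sigma> ` B"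
    then obtain b where "b \<in> B" "c = \<sigma> b" by blast
    then show "c \<in> B" using TB[of b] unfolding \<sigma>_def by (auto split: if_splits)
  qed
  show T_\<sigma>: "T b = \<sigma> b \<or> T b = - \<sigma> b" for b unfolding \<sigma>_def by auto
  have T_pm: "T x = \<sigma> y \<or> T x = - \<sigma> y" if "x = y \<or> x = - y" for x y
    using that T_\<sigma>[of y] by (auto simp: T_linear_simps)
  show "\<sigma> (\<sigma> (\<sigma> b)) = b" if b: "b \<in> B" for b
  proof -
    have "T (T (T b)) = \<sigma> (\<sigma> (\<sigma> b)) \<or> T (T (T b)) = - \<sigma> (\<sigma> (\<sigma> b))"
      using T_pm[OF T_pm[OF T_\<sigma>]] .
    moreover have "T (T (T b)) = b" using T_cube B(1) b by blast
    ultimately have "b = \<sigma> (\<sigma> (\<sigma> b)) \<or> - b = \<sigma> (\<sigma> (\<sigma> b))" by (metis minus_minus)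
    moreover have "\<sigma> (\<sigma> (\<sigma> b)) \<in> B" using \<sigma>_B b by blast
    ultimately show ?thesis using neg_notin_independent[OF B(2) b] by auto
  qed
  show "T b = b" if b: "b \<in> B" and fixed: "\<sigma> b = b" for b
  proof (rule ccontr)
    assume "T b \<noteq> b"
    then have "T b = - b" using T_\<sigma>[of b] fixed by simp
    then have "- b = b" using T_cube[of b] B(1) b by (auto simp: T_linear_simps)
    then show False using neg_notin_independent[OF B(2) b] b by simp
  qed
qed

lemma Ker_subset_span_signed_orbits:
  assumes B: "B \<subseteq> S" "span B = S" and \<sigma>_B: "\<sigma> ` B \<subseteq> B"
    and T_\<sigma>: "\<And>b. b \<in> B \<Longrightarrow> T b = \<sigma> b \<or> T b = - \<sigma> b"
    and \<sigma>_fix: "\<And>b. b \<in> B \<Longrightarrow> \<sigma> b = b \<Longrightarrow> T b = b"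
    and R: "R \<subseteq> B" "{b \<in> B. \<sigma> b \<noteq> b} \<subseteq> R \<union> \<sigma> ` R \<union> \<sigma> ` \<sigma> ` R"
  shows "Ker \<subseteq> span (proj_Ker ` (R \<union> \<sigma> ` R))"
proof -
  define M where "M = proj_Ker -` span (proj_Ker ` (R \<union> \<sigma> ` R))"
  have M: "subspace M" unfolding M_def using linear_proj_Ker subspace_span by (rule linear_subspace_vimage)
  have pm: "x \<in> M" if "y \<in> M" "x = y \<or> x = - y" for x y using that subspace_neg[OF M] by auto
  have Fix_M: "Fix \<subseteq> M" unfolding M_def using proj_Ker_Fix span_zero by auto
  have "B \<subseteq> M"
  proof
    fix b assume b: "b \<in> B"
    show "b \<in> M"
    proof (cases "\<sigma> b = b")
      case True
      then show ?thesis using b B(1) \<sigma>_fix Fix_M unfolding fixed_space_def by auto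
    next
      case False
      then obtain r where r: "r \<in> R" and b_r: "b = r \<or> b = \<sigma> r \<or> b = \<sigma> (\<sigma> r)" using b R(2) by blast
      have rB: "r \<in> B" "\<sigma> r \<in> B" using r R(1) \<sigma>_B by auto
      have r_M: "r \<in> M" "\<sigma> r \<in> M" using r unfolding M_def by (auto intro: span_base)
      have "T r \<in> M" using pm[OF r_M(2) T_\<sigma>[OF rB(1)]] .
      have "T (T r) \<in> M"
      proof -
        have "proj_Fix r \<in> M" using Fix_M proj_Fix_in_Fix rB(1) B(1) by blast
        then have "(3::real) *\<^sub>R proj_Fix r \<in> M" by (rule subspace_scale[OF M])
        then have "orbit_sum T r \<in> M" unfolding proj_Fix_def by simp
        moreover have "T (T r) = orbit_sum T r - r - T r" unfolding orbit_sum_def by simp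
        ultimately show ?thesis using r_M(1) \<open>T r \<in> M\<close> subspace_diff[OF M] by simp
      qed
      have "T (\<sigma> r) = T (T r) \<or> T (\<sigma> r) = - T (T r)"
        using T_\<sigma>[OF rB(1)] by (auto simp: T_linear_simps)
      then have "T (\<sigma> r) \<in> M" using pm[OF \<open>T (T r) \<in> M\<close>] by blast
      then have "\<sigma> (\<sigma> r) \<in> M" using pm T_\<sigma>[OF rB(2)] by (metis minus_minus)
      then show ?thesis using b_r r_M by blast
    qed
  qed
  then have "S \<subseteq> M" using B(2) span_minimal[OF _ M] by blast
  then show ?thesis using Ker_subset proj_Ker_Ker unfolding M_def by fastforce
qed

lemma dim_Ker_le_if_inv_basis:
  assumes "Z3_inv_basis_up_to_sign S T"
  shows "3 * dim Ker \<le> 2 * dim S"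
proof -
  obtain B where B: "B \<subseteq> S" "independent B" "span B = S"
    and inv: "\<forall>k<3. \<forall>b\<in>B. (T ^^ k) b \<in> B \<union> uminus ` B"
    using assms unfolding Z3_inv_basis_up_to_sign_def by blast
  have "T b \<in> B \<union> uminus ` B" if "b \<in> B" for b using inv[rule_format, of 1 b] that by simp
  then obtain \<sigma> where \<sigma>_B: "\<sigma> ` B \<subseteq> B" and \<sigma>_cube: "\<And>b. b \<in> B \<Longrightarrow> \<sigma> (\<sigma> (\<sigma> b)) = b"
    and T_\<sigma>: "\<And>b. b \<in> B \<Longrightarrow> T b = \<sigma> b \<or> T b = - \<sigma> b"
    and \<sigma>_fix: "\<And>b. b \<in> B \<Longrightarrow> \<sigma> b = b \<Longrightarrow> T b = b"
    using signed_permutation[OF B(1,2)] by blast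
  have fin_B: "finite B" using B(2) finiteI_independent by blast
  define B1 where "B1 = {b \<in> B. \<sigma> b \<noteq> b}"
  have fin_B1: "finite B1" using fin_B unfolding B1_def by simp
  have \<sigma>_B1: "\<sigma> ` B1 \<subseteq> B1"
  proof
    fix c assume "c \<in> \<sigma> ` B1"
    then obtain b where b: "b \<in> B" "\<sigma> b \<noteq> b" "c = \<sigma> b" unfolding B1_def by blast
    have "\<sigma> c \<noteq> c" using \<sigma>_cube[OF b(1)] b(2,3) by metis
    moreover have "c \<in> B" using \<sigma>_B b by blast
    ultimately show "c \<in> B1" unfolding B1_def by blast
  qed
  have "\<And>b. b \<in> B1 \<Longrightarrow> \<sigma> (\<sigma> (\<sigma> b)) = b" "\<And>b. b \<in> B1 \<Longrightarrow> \<sigma> b \<noteq> b"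
    using \<sigma>_cube unfolding B1_def by auto
  then obtain R where R: "R \<subseteq> B1" "B1 \<subseteq> R \<union> \<sigma> ` R \<union> \<sigma> ` \<sigma> ` R" "3 * card R \<le> card B1"
    using period3_transversal[OF fin_B1 \<sigma>_B1] by blast
  have "R \<subseteq> B" using R(1) unfolding B1_def by blast
  then have "Ker \<subseteq> span (proj_Ker ` (R \<union> \<sigma> ` R))"
    using Ker_subset_span_signed_orbits[OF B(1,3) \<sigma>_B T_\<sigma> \<sigma>_fix] R(2) unfolding B1_def by blast
  moreover have fin_R: "finite R" using R(1) fin_B1 finite_subset by blast
  ultimately have "dim Ker \<le> card (proj_Ker ` (R \<union> \<sigma> ` R))" by (intro dim_le_card) simp_all
  also have "\<dots> \<le> card (R \<union> \<sigma> ` R)" using fin_R by (simp add: card_image_le)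
  also have "\<dots> \<le> card R + card (\<sigma> ` R)" by (rule card_Un_le)
  also have "\<dots> \<le> 2 * card R" using card_image_le[OF fin_R, of \<sigma>] by simp
  finally have "3 * dim Ker \<le> 2 * card B1" using R(3) by linarith
  also have "\<dots> \<le> 2 * card B" using card_mono[OF fin_B] unfolding B1_def by simp
  also have "\<dots> = 2 * dim S" using dim_span_eq_card_independent[OF B(2)] B(3) by simp
  finally show ?thesis .
qed

lemma T_notin_span_insert:
  assumes w: "w \<in> Ker" and closed: "\<And>u. u \<in> span A \<Longrightarrow> T u \<in> span A" and w_notin: "w \<notin> span A"
  shows "T w \<notin> span (insert w A)"
proof
  assume "T w \<in> span (insert w A)"
  then obtain c where u: "T w - c *\<^sub>R w \<in> span A" by (auto simp: span_breakdown_eq)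
  define u where "u = T w - c *\<^sub>R w"
  define d where "d = 1 + c + c\<^sup>2"
  have "T u + (1 + c) *\<^sub>R u \<in> span A" using u closed unfolding u_def by (blast intro: span_add span_scale)
  moreover have "T u + (1 + c) *\<^sub>R u = (- d) *\<^sub>R w"
    unfolding u_def d_def using T_T_Ker[OF w] by (simp add: T_linear_simps algebra_simps power2_eq_square)
  ultimately have "inverse (- d) *\<^sub>R ((- d) *\<^sub>R w) \<in> span A" by (metis span_scale)
  moreover have "d \<noteq> 0"
    using zero_le_square[of "2 * c + 1"] unfolding d_def by (auto simp: algebra_simps power2_eq_square)
  ultimately have "w \<in> span A" by simp
  with w_notin show False ..
qed

lemma span_rotation_closed:
  assumes "X \<subseteq> Ker" and "u \<in> span (X \<union> T ` X)"
  shows "T u \<in> span (X \<union> T ` X)"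
proof -
  have "T ` (X \<union> T ` X) \<subseteq> span (X \<union> T ` X)"
  proof
    fix y assume "y \<in> T ` (X \<union> T ` X)"
    then obtain x where x: "x \<in> X" and "y = T x \<or> y = T (T x)" by auto
    moreover have "T (T x) = - x - T x" using T_T_Ker assms(1) x by blast
    moreover have "x \<in> span (X \<union> T ` X)" "T x \<in> span (X \<union> T ` X)" using x by (auto intro: span_base)
    ultimately show "y \<in> span (X \<union> T ` X)" by (metis span_diff span_neg)
  qed
  then have "T ` span (X \<union> T ` X) \<subseteq> span (X \<union> T ` X)"
    by (simp add: linear_span_image[OF linear_T, symmetric] span_minimal)
  then show ?thesis using assms(2) by blast
qed

definition rotation_independent :: "'a set \<Rightarrow> bool" where
  "rotation_independent X \<longleftrightarrow>
     finite X \<and> X \<subseteq> Ker \<and> independent (X \<union> T ` X) \<and> card (X \<union> T ` X) = 2 * card X"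

lemma rotation_independent_insert:
  assumes X: "rotation_independent X" and w: "w \<in> Ker" "w \<notin> span (X \<union> T ` X)"
  shows "rotation_independent (insert w X)" and "card (insert w X) = Suc (card X)"
proof -
  let ?A = "X \<union> T ` X"
  have fin: "finite X" and sub: "X \<subseteq> Ker" and ind: "independent ?A" and card: "card ?A = 2 * card X"
    using X unfolding rotation_independent_def by auto
  have Tw: "T w \<notin> span (insert w ?A)"
    using T_notin_span_insert[OF w(1) span_rotation_closed[OF sub] w(2)] .
  have w_notin: "w \<notin> ?A" and Tw_notin: "T w \<notin> insert w ?A"
    using w(2) Tw by (auto intro: span_base)
  have eq: "insert w X \<union> T ` insert w X = insert (T w) (insert w ?A)" by auto
  show "card (insert w X) = Suc (card X)" using fin w_notin by simp
  moreover have "independent (insert (T w) (insert w ?A))"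
    using independent_insertI[OF Tw independent_insertI[OF w(2) ind]] .
  moreover have "card (insert (T w) (insert w ?A)) = card ?A + 2"
    using fin w_notin Tw_notin by simp
  ultimately show "rotation_independent (insert w X)"
    unfolding rotation_independent_def eq using fin sub w(1) card by simp
qed

lemma Ker_rotation_basis:
  obtains X where "finite X" "X \<subseteq> Ker" "Ker \<subseteq> span (X \<union> T ` X)" "2 * card X \<le> dim Ker"
proof -
  have bound: "2 * card X \<le> dim Ker" if "rotation_independent X" for X
  proof -
    have "X \<union> T ` X \<subseteq> Ker" using that T_in_Ker unfolding rotation_independent_def by auto
    then show ?thesis
      using that independent_card_le_dim unfolding rotation_independent_def by metis
  qed
  have "rotation_independent {}" unfolding rotation_independent_def by (simp add: independent_empty)
  then obtain X where X: "rotation_independent X"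
    and max: "\<And>Y. rotation_independent Y \<Longrightarrow> card Y \<le> card X"
    using ex_has_greatest_nat[of rotation_independent "{}" card "Suc (dim Ker)"] bound
    by fastforce
  have "Ker \<subseteq> span (X \<union> T ` X)"
  proof
    fix w assume "w \<in> Ker"
    show "w \<in> span (X \<union> T ` X)"
    proof (rule ccontr)
      assume "w \<notin> span (X \<union> T ` X)"
      then show False
        using rotation_independent_insert[OF X \<open>w \<in> Ker\<close>] max by fastforce
    qed
  qed
  then show thesis using that X bound unfolding rotation_independent_def by blast
qed

lemma inv_basis_if_invariant_spanning:
  assumes "B \<subseteq> S" "finite B" "S \<subseteq> span B" "card B \<le> dim S" "T ` B \<subseteq> B"
  shows "Z3_inv_basis_up_to_sign S T"
proof -
  have "independent B" using card_le_dim_spanning assms(1-4) by blast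
  moreover have "span B = S" using assms(1,3) span_minimal[OF _ subspace_S] by blast
  moreover have "(T ^^ k) ` B \<subseteq> B" for k by (induction k) (use assms(5) in auto)
  ultimately show ?thesis using assms(1) unfolding Z3_inv_basis_up_to_sign_def by blast
qed

definition translated_orbit :: "'a \<Rightarrow> 'a \<Rightarrow> 'a set" where
  "translated_orbit f x = {f + x, f + T x, f + T (T x)}"

lemma card_translated_orbit: "card (translated_orbit f x) \<le> 3"
  unfolding translated_orbit_def by (simp add: card_insert_if)

lemma translated_orbit_subset:
  assumes "f \<in> Fix" and "x \<in> Ker"
  shows "translated_orbit f x \<subseteq> S"
proof -
  have "f \<in> S" "x \<in> S" "T x \<in> S" "T (T x) \<in> S" using assms Fix_subset Ker_subset T_in_S by auto
  then show ?thesis unfolding translated_orbit_def using subspace_add[OF subspace_S] by blast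
qed

lemma T_translated_orbit:
  assumes "f \<in> Fix" and "x \<in> Ker"
  shows "T ` translated_orbit f x \<subseteq> translated_orbit f x"
proof -
  have "T f = f" and "T (T (T x)) = x" using assms T_cube fixed_space_def Ker_subset by auto
  then show ?thesis unfolding translated_orbit_def by (simp add: T_linear_simps)
qed

lemma translated_orbit_span:
  assumes "x \<in> Ker"
  shows "{f, x, T x} \<subseteq> span (translated_orbit f x)"
proof -
  let ?U = "span (translated_orbit f x)"
  have base: "f + x \<in> ?U" "f + T x \<in> ?U" "f + T (T x) \<in> ?U"
    unfolding translated_orbit_def by (auto intro: span_base)
  have "(f + x) + (f + T x) + (f + T (T x)) = (3::real) *\<^sub>R f + orbit_sum T x"
    unfolding orbit_sum_def by (simp add: scaleR_add_left[of 2 1, simplified] scaleR_2 algebra_simps)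
  then have "f = (1/3) *\<^sub>R ((f + x) + (f + T x) + (f + T (T x)))"
    using assms unfolding orbit_sum_kernel_def by simp
  then have f: "f \<in> ?U" using base by (metis span_add span_scale)
  have "x = (f + x) - f" "T x = (f + T x) - f" by simp_all
  then have "x \<in> ?U" "T x \<in> ?U" using f base(1,2) span_diff by metis+
  then show ?thesis using f by blast
qed

lemma inv_basis_of_pairing:
  assumes X: "finite X" "X \<subseteq> Ker" "Ker \<subseteq> span (X \<union> T ` X)" "2 * card X \<le> dim Ker"
    and F: "F \<subseteq> Fix" "finite F" "Fix \<subseteq> span F" "card F = dim Fix"
    and g: "g ` X \<subseteq> F" "inj_on g X"
  shows "Z3_inv_basis_up_to_sign S T"
proof -
  have g_Fix: "g x \<in> Fix" if "x \<in> X" for x using that g(1) F(1) by blast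
  have X_Ker: "x \<in> Ker" if "x \<in> X" for x using that X(2) by blast
  define Orb where "Orb = (\<Union>x\<in>X. translated_orbit (g x) x)"
  define B where "B = Orb \<union> (F - g ` X)"
  show ?thesis
  proof (rule inv_basis_if_invariant_spanning)
    show "finite B" unfolding B_def Orb_def translated_orbit_def using X(1) F(2) by simp
    show "B \<subseteq> S"
      using translated_orbit_subset[OF g_Fix X_Ker] F(1) Fix_subset unfolding B_def Orb_def by blast
    have "T ` Orb \<subseteq> Orb" using T_translated_orbit[OF g_Fix X_Ker] unfolding Orb_def by blast
    moreover have "T ` (F - g ` X) \<subseteq> F - g ` X" using F(1) unfolding fixed_space_def by auto
    ultimately show "T ` B \<subseteq> B" unfolding B_def image_Un by blast
    have orbit_span: "{g x, x, T x} \<subseteq> span B" if x: "x \<in> X" for x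
    proof -
      have "translated_orbit (g x) x \<subseteq> B" using x unfolding B_def Orb_def by blast
      then have "span (translated_orbit (g x) x) \<subseteq> span B" by (rule span_mono)
      then show ?thesis using translated_orbit_span[OF X_Ker[OF x]] by blast
    qed
    have "F \<subseteq> span B" using orbit_span unfolding B_def by (blast intro: span_base)
    then have "Fix \<subseteq> span B" using F(3) span_minimal[OF _ subspace_span] by blast
    moreover have "X \<union> T ` X \<subseteq> span B" using orbit_span by blast
    then have "Ker \<subseteq> span B" using X(3) span_minimal[OF _ subspace_span] by blast
    ultimately show "S \<subseteq> span B" by (rule S_subset_span)
    have "card Orb \<le> (\<Sum>x\<in>X. card (translated_orbit (g x) x))"
      unfolding Orb_def using X(1) by (rule card_UN_le)
    also have "\<dots> \<le> (\<Sum>x\<in>X. 3)" by (rule sum_mono) (rule card_translated_orbit)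
    finally have "card B \<le> 3 * card X + card (F - g ` X)"
      unfolding B_def using card_Un_le[of Orb "F - g ` X"] by simp
    also have "card (F - g ` X) = card F - card X"
      using card_Diff_subset[OF finite_imageI[OF X(1)] g(1)] card_image[OF g(2)] by simp
    finally show "card B \<le> dim S" using dim_S X(4) F(4) card_image[OF g(2)] card_mono[OF F(2) g(1)]
      by linarith
  qed
qed

lemma inv_basis_if_dim_Ker_le:
  assumes "dim Ker \<le> 2 * dim Fix"
  shows "Z3_inv_basis_up_to_sign S T"
proof -
  obtain X where X: "finite X" "X \<subseteq> Ker" "Ker \<subseteq> span (X \<union> T ` X)" "2 * card X \<le> dim Ker"
    by (rule Ker_rotation_basis)
  obtain F where F: "F \<subseteq> Fix" "independent F" "Fix \<subseteq> span F" "card F = dim Fix"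
    using basis_exists[of Fix] by blast
  have fin_F: "finite F" using F(2) finiteI_independent by blast
  obtain g where g: "g ` X \<subseteq> F" "inj_on g X"
    using card_le_inj[OF X(1) fin_F] X(4) assms F(4) by auto
  show ?thesis by (rule inv_basis_of_pairing[OF X F(1) fin_F F(3,4) g])
qed

theorem inv_basis_iff_dim_Ker_le: "Z3_inv_basis_up_to_sign S T \<longleftrightarrow> dim Ker \<le> 2 * dim Fix"
  using dim_Ker_le_if_inv_basis inv_basis_if_dim_Ker_le dim_S by fastforce

end

lemma Z3_rep_Times:
  assumes "Z3_rep S1 T1" and "Z3_rep S2 T2"
  shows "Z3_rep (S1 \<times> S2) (map_prod T1 T2)"
proof -
  interpret V1: Z3_rep S1 T1 by fact
  interpret V2: Z3_rep S2 T2 by fact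
  show ?thesis
  proof (rule Z3_rep.intro)
    show "subspace (S1 \<times> S2)" using V1.subspace_S V2.subspace_S by (rule subspace_Times)
    show "linear (map_prod T1 T2)"
    proof (rule linearI)
      fix x y and c :: real
      show "map_prod T1 T2 (x + y) = map_prod T1 T2 x + map_prod T1 T2 y"
        by (cases x, cases y) (simp add: V1.T_linear_simps V2.T_linear_simps)
      show "map_prod T1 T2 (c *\<^sub>R x) = c *\<^sub>R map_prod T1 T2 x"
        by (cases x) (simp add: V1.T_linear_simps V2.T_linear_simps)
    qed
  qed (auto simp: V1.T_in_S V2.T_in_S V1.T_cube V2.T_cube)
qed

lemma fixed_space_Times:
  "fixed_space (S1 \<times> S2) (map_prod T1 T2) = fixed_space S1 T1 \<times> fixed_space S2 T2"
  by (auto simp: fixed_space_def)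

lemma orbit_sum_kernel_Times:
  "orbit_sum_kernel (S1 \<times> S2) (map_prod T1 T2) = orbit_sum_kernel S1 T1 \<times> orbit_sum_kernel S2 T2"
  by (auto simp: orbit_sum_kernel_def orbit_sum_def zero_prod_def)

lemma inv_basis_Times_iff:
  assumes V: "Z3_rep S1 T1" and W: "Z3_rep S2 T2"
    and balanced: "dim (orbit_sum_kernel S2 T2) = 2 * dim (fixed_space S2 T2)"
  shows "Z3_inv_basis_up_to_sign (S1 \<times> S2) (map_prod T1 T2) \<longleftrightarrow> Z3_inv_basis_up_to_sign S1 T1"
proof -
  interpret V: Z3_rep S1 T1 by fact
  interpret W: Z3_rep S2 T2 by fact
  interpret VW: Z3_rep "S1 \<times> S2" "map_prod T1 T2" using V W by (rule Z3_rep_Times)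
  have "dim (fixed_space (S1 \<times> S2) (map_prod T1 T2)) = dim (fixed_space S1 T1) + dim (fixed_space S2 T2)"
    unfolding fixed_space_Times using V.subspace_Fix W.subspace_Fix by (rule dim_Times)
  moreover have "dim (orbit_sum_kernel (S1 \<times> S2) (map_prod T1 T2)) =
      dim (orbit_sum_kernel S1 T1) + dim (orbit_sum_kernel S2 T2)"
    unfolding orbit_sum_kernel_Times using V.subspace_Ker W.subspace_Ker by (rule dim_Times)
  ultimately show ?thesis using VW.inv_basis_iff_dim_Ker_le V.inv_basis_iff_dim_Ker_le balanced by simp
qed

lemma subspace_vec_supported:
  "subspace {x :: 'a::real_vector^'m. \<forall>j. j \<notin> J \<longrightarrow> x $ j = 0}"
  unfolding subspace_def by auto

lemma dim_vec_supported:
  fixes J :: "'m::finite set"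
  shows "dim {x :: 'a::euclidean_space^'m. \<forall>j. j \<notin> J \<longrightarrow> x $ j = 0} = card J * DIM('a)"
    (is "dim ?Z = _")
proof -
  define E where "E = (\<lambda>(j, u). axis j u :: 'a^'m) ` (J \<times> Basis)"
  have "E \<subseteq> Basis" unfolding E_def Basis_vec_def by auto
  then have ind: "independent E" by (rule independent_mono[OF independent_Basis])
  have "?Z \<subseteq> span E"
  proof
    fix x assume x: "x \<in> ?Z"
    have "(x \<bullet> b) *\<^sub>R b \<in> span E" if "b \<in> Basis" for b
    proof -
      obtain j u where u: "u \<in> Basis" and b: "b = axis j u"
        using \<open>b \<in> Basis\<close> unfolding Basis_vec_def by auto
      show ?thesis
      proof (cases "j \<in> J")
        case True
        then show ?thesis unfolding E_def b using u by (intro span_scale span_base) auto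
      next
        case False
        then show ?thesis using x unfolding b by (simp add: inner_axis span_zero)
      qed
    qed
    then have "(\<Sum>b\<in>Basis. (x \<bullet> b) *\<^sub>R b) \<in> span E" by (rule span_sum)
    then show "x \<in> span E" by (simp add: euclidean_representation)
  qed
  moreover have "E \<subseteq> ?Z" unfolding E_def by (auto simp: axis_def)
  ultimately have "span E = ?Z" using span_minimal[OF _ subspace_vec_supported] by blast
  moreover have "inj_on (\<lambda>(j, u). axis j u :: 'a^'m) (J \<times> Basis)"
    by (auto simp: inj_on_def axis_eq_axis nonzero_Basis)
  then have "card E = card J * DIM('a)" unfolding E_def by (simp add: card_image card_cartesian_product)
  ultimately show ?thesis using dim_span_eq_card_independent[OF ind] by simp
qed

lemma cyc3_cube: "cyc3 (cyc3 (cyc3 y)) = y"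
proof -
  have "cyc3 (cyc3 (cyc3 y)) $ i = y $ i" for i
  proof -
    have "cyc3 (cyc3 (cyc3 y)) $ i = y $ (i + 1 + 1 + 1)" by (simp only: cyc3_def vec_lambda_beta)
    moreover have "i + 1 + 1 + 1 = (i::3)" by simp
    ultimately show ?thesis by (simp only:)
  qed
  then show ?thesis by (simp add: vec_eq_iff)
qed

lemma linear_cyc3: "linear cyc3"
  unfolding cyc3_def by (intro linearI) (simp_all add: vec_eq_iff)

lemma cyc3_eq_self_iff: "cyc3 y = y \<longleftrightarrow> (\<forall>i. y $ i = y $ 1)"
proof
  assume "cyc3 y = y"
  then have step: "y $ (i + 1) = y $ i" for i unfolding cyc3_def vec_eq_iff by auto
  have "y $ 2 = y $ 1" "y $ 3 = y $ 1" using step[of 1] step[of 2] by simp_all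
  then show "\<forall>i. y $ i = y $ 1" by (simp add: forall_3)
next
  assume const: "\<forall>i. y $ i = y $ 1"
  have "y $ (i + 1) = y $ i" for i using const by metis
  then show "cyc3 y = y" unfolding cyc3_def by (simp add: vec_eq_iff)
qed

definition reg_action :: "real^3^'m \<Rightarrow> real^3^'m" where
  "reg_action x = (\<chi> j. cyc3 (x $ j))"

lemma sum_action_eq_map_prod: "sum_action T = map_prod T reg_action"
  by (auto simp: sum_action_def reg_action_def)

lemma Z3_rep_reg_copies:
  fixes J :: "'m::finite set"
  shows "Z3_rep (reg_copies J) reg_action"
proof (rule Z3_rep.intro)
  show "subspace (reg_copies J)" unfolding reg_copies_def by (rule subspace_vec_supported)
  show "linear reg_action"
    unfolding reg_action_def
    by (intro linearI) (simp_all add: vec_eq_iff linear_add[OF linear_cyc3] linear_scale[OF linear_cyc3])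
qed (auto simp: reg_copies_def reg_action_def cyc3_cube linear_0[OF linear_cyc3])

lemma dim_reg_copies:
  fixes J :: "'m::finite set"
  shows "dim (reg_copies J) = 3 * card J"
  unfolding reg_copies_def dim_vec_supported by simp

lemma dim_Fix_reg_copies:
  fixes J :: "'m::finite set"
  shows "dim (fixed_space (reg_copies J) reg_action) = card J"
proof -
  define Y where "Y = {y :: real^'m. \<forall>j. j \<notin> J \<longrightarrow> y $ j = 0}"
  define const :: "real^'m \<Rightarrow> real^3^'m" where "const y = (\<chi> j. \<chi> i. y $ j)" for y
  have "fixed_space (reg_copies J) reg_action = const ` Y"
  proof
    show "const ` Y \<subseteq> fixed_space (reg_copies J) reg_action"
      unfolding fixed_space_def const_def Y_def reg_copies_def reg_action_def
      by (auto simp: vec_eq_iff cyc3_def)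
    show "fixed_space (reg_copies J) reg_action \<subseteq> const ` Y"
    proof
      fix x assume "x \<in> fixed_space (reg_copies J) reg_action"
      then have supp: "\<forall>j. j \<notin> J \<longrightarrow> x $ j = 0" and "\<And>j. cyc3 (x $ j) = x $ j"
        unfolding fixed_space_def reg_copies_def reg_action_def vec_eq_iff by auto
      then have "x = const (\<chi> j. x $ j $ 1)" unfolding const_def cyc3_eq_self_iff by (simp add: vec_eq_iff)
      moreover have "(\<chi> j. x $ j $ 1) \<in> Y" unfolding Y_def using supp by simp
      ultimately show "x \<in> const ` Y" by blast
    qed
  qed
  moreover have "linear const" unfolding const_def by (intro linearI) (simp_all add: vec_eq_iff)
  moreover have "inj const" unfolding const_def inj_on_def by (auto simp: vec_eq_iff)
  moreover have "dim Y = card J" unfolding Y_def dim_vec_supported by simp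
  ultimately show ?thesis by (metis dim_image_eq inj_on_subset subset_UNIV)
qed

lemma dim_Ker_reg_copies:
  fixes J :: "'m::finite set"
  shows "dim (orbit_sum_kernel (reg_copies J) reg_action) = 2 * dim (fixed_space (reg_copies J) reg_action)"
  using Z3_rep.dim_S[OF Z3_rep_reg_copies[of J]] dim_reg_copies[of J] dim_Fix_reg_copies[of J]
  by linarith

theorem corollary2p22:
  fixes T :: "'v::euclidean_space \<Rightarrow> 'v" and J :: "'m::finite set" and n :: nat
  assumes "linear T" and "T \<circ> T \<circ> T = id" and "card J = n"
  shows "Z3_inv_basis_up_to_sign (UNIV :: 'v set) T \<longleftrightarrow>
         Z3_inv_basis_up_to_sign (UNIV \<times> reg_copies J) (sum_action T)"
proof -
  \<comment> \<open>\<open>card J = n\<close> only names the number of copies; the argument works for every J.\<close>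
  have "Z3_rep (UNIV :: 'v set) T"
    using assms(1,2) by (intro Z3_rep.intro) (auto simp: fun_eq_iff)
  then show ?thesis
    unfolding sum_action_eq_map_prod
    using inv_basis_Times_iff Z3_rep_reg_copies dim_Ker_reg_copies by blast
qed

end
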